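(* For every integer $n\geq 5$, $\pi(\overline{C_n})=4$.
   Context: $C_n$ is the cycle on vertices $v_1,\dots,v_n$ (with $v_i$ adjacent to $v_{i+1}$, indices mod $n$), and $\overline{C_n}$ is its complement: two distinct vertices are adjacent in $\overline{C_n}$ iff they are not adjacent in $C_n$; for $n\geq 5$ it is connected. For a connected graph $G$, $d(x,y)$ denotes the graph distance. For a permutation $f$ of $V(G)$ and distinct vertices $x,y$, let $\delta_f(x,y)=|d(x,y)-d(f(x),f(y))|$, and let $\delta_f(G)=\sum \delta_f(x,y)$, the sum over all unordered pairs $\{x,y\}$ of distinct vertices. $\pi(G)$ denotes the smallest positive value of $\delta_f(G)$ over all permutations $f$ of $V(G)$. *)

theory Defs
  imports "HOL-Combinatorics.Permutations"
begin

text \<open>Graphs on the vertex set V (natural numbers) given by a symmetric edge relation E.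
  The cycle C_n has vertices 0..n-1 (v_{i+1} is vertex i), with i adjacent to (i+1) mod n.\<close>

definition cycle_adj :: "nat \<Rightarrow> nat \<Rightarrow> nat \<Rightarrow> bool" where
  "cycle_adj n x y \<longleftrightarrow> x < n \<and> y < n \<and> x \<noteq> y \<and> (y = (x + 1) mod n \<or> x = (y + 1) mod n)"

definition co_cycle_adj :: "nat \<Rightarrow> nat \<Rightarrow> nat \<Rightarrow> bool" where
  "co_cycle_adj n x y \<longleftrightarrow> x < n \<and> y < n \<and> x \<noteq> y \<and> \<not> cycle_adj n x y"

definition gdist :: "(nat \<Rightarrow> nat \<Rightarrow> bool) \<Rightarrow> nat \<Rightarrow> nat \<Rightarrow> nat" where
  "gdist E x y = (LEAST k. \<exists>p. length p = Suc k \<and> hd p = x \<and> last p = y \<and>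
                      (\<forall>i<k. E (p ! i) (p ! Suc i)))"

definition delta_pair :: "(nat \<Rightarrow> nat \<Rightarrow> bool) \<Rightarrow> (nat \<Rightarrow> nat) \<Rightarrow> nat \<Rightarrow> nat \<Rightarrow> nat" where
  "delta_pair E f x y = nat \<bar>int (gdist E x y) - int (gdist E (f x) (f y))\<bar>"

definition delta_total :: "nat set \<Rightarrow> (nat \<Rightarrow> nat \<Rightarrow> bool) \<Rightarrow> (nat \<Rightarrow> nat) \<Rightarrow> nat" where
  "delta_total V E f = (\<Sum>(x, y) \<in> {(x, y). x \<in> V \<and> y \<in> V \<and> x < y}. delta_pair E f x y)"

definition pi_graph :: "nat set \<Rightarrow> (nat \<Rightarrow> nat \<Rightarrow> bool) \<Rightarrow> nat" where
  "pi_graph V E = (LEAST s. s > 0 \<and> (\<exists>f. f permutes V \<and> delta_total V E f = s))"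

end

theory Submission
  imports Defs
begin

text \<open>In the complement of \<open>C\<^sub>n\<close> with \<open>n \<ge> 5\<close>, two distinct vertices are at distance 1 if they are
  non-adjacent in \<open>C\<^sub>n\<close>, and at distance 2 if they are adjacent (\<open>i + 3\<close> is a common neighbour of
  \<open>i\<close> and \<open>i + 1\<close>). Hence \<open>\<delta>\<^sub>f(x, y) \<le> 1\<close>, with equality exactly when \<open>f\<close> changes the
  adjacency of \<open>x, y\<close> in \<open>C\<^sub>n\<close>, so \<open>\<delta>\<^sub>f\<close> is the size of the symmetric difference of the edge set
  of \<open>C\<^sub>n\<close> and its pull-back along \<open>f\<close>. Both edge sets have the same size, so this number is even;
  both graphs are 2-regular, so an endpoint of a changed pair lies on a second changed pair, and a
  nonzero value is at least 3, hence at least 4. Swapping two adjacent vertices changes exactly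
  four pairs.\<close>

definition has_walk :: "('a \<Rightarrow> 'a \<Rightarrow> bool) \<Rightarrow> nat \<Rightarrow> 'a \<Rightarrow> 'a \<Rightarrow> bool" where
  "has_walk E k x y \<longleftrightarrow> (\<exists>p. length p = Suc k \<and> hd p = x \<and> last p = y \<and>
                      (\<forall>i<k. E (p ! i) (p ! Suc i)))"

lemma gdist_eq_Least_has_walk: "gdist E x y = (LEAST k. has_walk E k x y)"
  unfolding gdist_def has_walk_def ..

lemma has_walk_0_iff: "has_walk E 0 x y \<longleftrightarrow> x = y"
proof
  assume "has_walk E 0 x y"
  then obtain p where "length p = 1" "hd p = x" "last p = y"
    unfolding has_walk_def by auto
  then show "x = y" by (cases p) auto
qed (auto simp: has_walk_def intro: exI[of _ "[x]"])

lemma has_walk_Suc_0_iff: "has_walk E (Suc 0) x y \<longleftrightarrow> E x y"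
proof
  assume "has_walk E (Suc 0) x y"
  then obtain p where p: "length p = Suc (Suc 0)" "hd p = x" "last p = y" "E (p ! 0) (p ! 1)"
    unfolding has_walk_def by auto
  moreover have "p \<noteq> []" using p(1) by auto
  ultimately have "p ! 0 = x" "p ! 1 = y"
    by (simp_all add: hd_conv_nth[symmetric] last_conv_nth)
  then show "E x y" using p(4) by simp
next
  assume "E x y"
  then show "has_walk E (Suc 0) x y"
    unfolding has_walk_def by (intro exI[of _ "[x, y]"]) simp
qed

lemma has_walk_2I: "E x z \<Longrightarrow> E z y \<Longrightarrow> has_walk E 2 x y"
  unfolding has_walk_def
  by (intro exI[of _ "[x, z, y]"]) (auto simp: less_Suc_eq numeral_2_eq_2)

lemma gdist_self: "gdist E x x = 0"
  by (simp add: gdist_eq_Least_has_walk has_walk_0_iff)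

lemma gdist_eq_1:
  assumes "x \<noteq> y" "E x y"
  shows "gdist E x y = 1"
  unfolding gdist_eq_Least_has_walk
proof (rule Least_equality)
  fix k assume "has_walk E k x y"
  with \<open>x \<noteq> y\<close> show "1 \<le> k" by (cases k) (auto simp: has_walk_0_iff)
qed (simp add: assms has_walk_Suc_0_iff)

lemma gdist_eq_2:
  assumes "x \<noteq> y" "\<not> E x y" "E x z" "E z y"
  shows "gdist E x y = 2"
  unfolding gdist_eq_Least_has_walk
proof (rule Least_equality)
  show "has_walk E 2 x y" using assms(3,4) by (rule has_walk_2I)
  fix k assume "has_walk E k x y"
  with assms(1,2) show "2 \<le> k"
    by (cases "k < 2") (auto simp: less_2_cases_iff has_walk_0_iff has_walk_Suc_0_iff)
qed

definition edge_pairs :: "'a::linorder set \<Rightarrow> ('a \<Rightarrow> 'a \<Rightarrow> bool) \<Rightarrow> ('a \<times> 'a) set" where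
  "edge_pairs V R = {(x, y). x \<in> V \<and> y \<in> V \<and> x < y \<and> R x y}"

definition changed_pairs :: "'a::linorder set \<Rightarrow> ('a \<Rightarrow> 'a \<Rightarrow> bool) \<Rightarrow> ('a \<Rightarrow> 'a) \<Rightarrow> ('a \<times> 'a) set" where
  "changed_pairs V R f = {(x, y). x \<in> V \<and> y \<in> V \<and> x < y \<and> R x y \<noteq> R (f x) (f y)}"

lemma finite_edge_pairs: "finite V \<Longrightarrow> finite (edge_pairs V R)"
  unfolding edge_pairs_def by (rule finite_subset[of _ "V \<times> V"]) auto

lemma finite_changed_pairs: "finite V \<Longrightarrow> finite (changed_pairs V R f)"
  unfolding changed_pairs_def by (rule finite_subset[of _ "V \<times> V"]) auto

lemma min_max_eq_iff:
  fixes p q r s :: "'a::linorder"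
  shows "(min p q, max p q) = (min r s, max r s) \<longleftrightarrow> p = r \<and> q = s \<or> p = s \<and> q = r"
  by (cases "p \<le> q"; cases "r \<le> s") (auto simp: min_def max_def)

lemma card_edge_pairs_permutes_le:
  assumes "finite V" "g permutes V" "symp R"
  shows "card (edge_pairs V (\<lambda>x y. R (g x) (g y))) \<le> card (edge_pairs V R)"
proof (rule card_inj_on_le)
  let ?h = "\<lambda>(x, y). (min (g x) (g y), max (g x) (g y))"
  have inj: "inj g" using assms(2) by (rule permutes_inj)
  show "inj_on ?h (edge_pairs V (\<lambda>x y. R (g x) (g y)))"
  proof (rule inj_onI)
    fix p q
    assume "p \<in> edge_pairs V (\<lambda>x y. R (g x) (g y))" "q \<in> edge_pairs V (\<lambda>x y. R (g x) (g y))"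
    then obtain a b c d where p: "p = (a, b)" "a < b" and q: "q = (c, d)" "c < d"
      by (auto simp: edge_pairs_def)
    assume "?h p = ?h q"
    then have "g a = g c \<and> g b = g d \<or> g a = g d \<and> g b = g c"
      unfolding p q prod.case min_max_eq_iff .
    then have "a = c \<and> b = d \<or> a = d \<and> b = c" using inj by (auto dest: injD)
    with p q show "p = q" by auto
  qed
  show "?h ` edge_pairs V (\<lambda>x y. R (g x) (g y)) \<subseteq> edge_pairs V R"
  proof (rule image_subsetI)
    fix p assume "p \<in> edge_pairs V (\<lambda>x y. R (g x) (g y))"
    then obtain a b where p: "p = (a, b)" "a \<in> V" "b \<in> V" "a < b" "R (g a) (g b)"
      by (auto simp: edge_pairs_def)
    have "g a \<in> V" "g b \<in> V" using p(2,3) permutes_in_image[OF assms(2)] by auto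
    moreover have "g a \<noteq> g b" using p(4) inj by (auto dest: injD)
    moreover have "R (g b) (g a)" using assms(3) p(5) by (rule sympD)
    ultimately show "?h p \<in> edge_pairs V R"
      using p(5) unfolding p(1) by (cases "g a < g b") (auto simp: edge_pairs_def min_def max_def)
  qed
  show "finite (edge_pairs V R)" using assms(1) by (rule finite_edge_pairs)
qed

lemma card_edge_pairs_permutes:
  assumes "finite V" "f permutes V" "symp R"
  shows "card (edge_pairs V (\<lambda>x y. R (f x) (f y))) = card (edge_pairs V R)"
proof (rule antisym)
  show "card (edge_pairs V (\<lambda>x y. R (f x) (f y))) \<le> card (edge_pairs V R)"
    using assms by (rule card_edge_pairs_permutes_le)
  have "symp (\<lambda>x y. R (f x) (f y))" using assms(3) by (auto intro: sympI dest: sympD)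
  with assms(1) permutes_inv[OF assms(2)]
  have "card (edge_pairs V (\<lambda>x y. R (f (inv f x)) (f (inv f y)))) \<le> card (edge_pairs V (\<lambda>x y. R (f x) (f y)))"
    by (rule card_edge_pairs_permutes_le)
  then show "card (edge_pairs V R) \<le> card (edge_pairs V (\<lambda>x y. R (f x) (f y)))"
    by (simp add: permutes_inverses(1)[OF assms(2)])
qed

lemma changed_pairs_eq_sym_diff:
  "changed_pairs V R f = (edge_pairs V R - edge_pairs V (\<lambda>x y. R (f x) (f y))) \<union>
     (edge_pairs V (\<lambda>x y. R (f x) (f y)) - edge_pairs V R)"
  unfolding changed_pairs_def edge_pairs_def by auto

lemma even_card_changed_pairs:
  assumes "finite V" "f permutes V" "symp R"
  shows "even (card (changed_pairs V R f))"
proof -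
  let ?A = "edge_pairs V R" and ?B = "edge_pairs V (\<lambda>x y. R (f x) (f y))"
  have fin: "finite ?A" "finite ?B" using assms(1) by (simp_all add: finite_edge_pairs)
  have "card (changed_pairs V R f) = card (?A - ?B) + card (?B - ?A)"
    unfolding changed_pairs_eq_sym_diff by (rule card_Un_disjoint) (use fin in auto)
  also have "\<dots> = 2 * (card ?A - card (?A \<inter> ?B))"
    using card_Diff_subset_Int[of ?A ?B] card_Diff_subset_Int[of ?B ?A] fin
      card_edge_pairs_permutes[OF assms]
    by (simp add: Int_commute)
  finally show ?thesis by simp
qed

lemma card_Collect_permutes:
  assumes "f permutes V"
  shows "card {y \<in> V. P (f y)} = card {y \<in> V. P y}"
proof -
  have "f ` {y \<in> V. P (f y)} = {y \<in> V. P y}"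
    using permutes_image[OF assms] by auto
  moreover have "inj_on f {y \<in> V. P (f y)}"
    using permutes_inj_on[OF assms] by (auto intro: inj_on_subset)
  ultimately show ?thesis by (metis card_image)
qed

lemma card_eq_Diff_nonempty_swap:
  assumes "finite A" "finite B" "card A = card B" "A - B \<noteq> {}"
  shows "B - A \<noteq> {}"
proof
  assume "B - A = {}"
  then have "B \<subseteq> A" by blast
  with assms(1,3) have "B = A" by (metis card_subset_eq)
  with assms(4) show False by blast
qed

lemma exists_other_changed_pair:
  assumes "finite V" "f permutes V" and regular: "\<And>w. w \<in> V \<Longrightarrow> card {y \<in> V. R w y} = k"
    and "x \<in> V" "y \<in> V" "R x y \<noteq> R (f x) (f y)"
  obtains z where "z \<in> V" "z \<noteq> y" "R x z \<noteq> R (f x) (f z)"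
proof -
  let ?N = "{z \<in> V. R x z}" and ?N' = "{z \<in> V. R (f x) (f z)}"
  have "card ?N' = card {z \<in> V. R (f x) z}"
    using assms(2) by (rule card_Collect_permutes)
  also have "\<dots> = card ?N" using regular permutes_in_image[OF assms(2)] assms(4) by simp
  finally have card_eq: "card ?N = card ?N'" ..
  have fin: "finite ?N" "finite ?N'" using assms(1) by simp_all
  have "\<exists>z \<in> V. z \<noteq> y \<and> R x z \<noteq> R (f x) (f z)"
  proof (cases "R x y")
    case True
    with assms(5,6) have "y \<in> ?N - ?N'" by simp
    then have "?N' - ?N \<noteq> {}" using card_eq_Diff_nonempty_swap[OF fin card_eq] by blast
    with True show ?thesis by auto
  next
    case False
    with assms(5,6) have "y \<in> ?N' - ?N" by simp
    then have "?N - ?N' \<noteq> {}" using card_eq_Diff_nonempty_swap[OF fin(2,1) card_eq[symmetric]] by blast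
    with False show ?thesis by auto
  qed
  then show ?thesis using that by blast
qed

lemma doubleton_in_image_changed_pairs:
  assumes "symp R" "a \<in> V" "b \<in> V" "a \<noteq> b" "R a b \<noteq> R (f a) (f b)"
  shows "{a, b} \<in> (\<lambda>(x, y). {x, y}) ` changed_pairs V R f"
proof (cases "a < b")
  case True
  with assms(2-5) show ?thesis unfolding changed_pairs_def by force
next
  case False
  with assms(4) have "b < a" by simp
  moreover have "R b a \<noteq> R (f b) (f a)" using assms(1,5) by (auto dest: sympD)
  ultimately have "(b, a) \<in> changed_pairs V R f" using assms(2,3) unfolding changed_pairs_def by simp
  then show ?thesis by (auto simp: insert_commute intro: image_eqI)
qed

lemma card_changed_pairs_ge_4:
  assumes "finite V" "f permutes V" "symp R" "irreflp R"
    and regular: "\<And>w. w \<in> V \<Longrightarrow> card {y \<in> V. R w y} = k"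
    and nonempty: "changed_pairs V R f \<noteq> {}"
  shows "card (changed_pairs V R f) \<ge> 4"
proof -
  let ?C = "changed_pairs V R f"
  obtain x y where xy: "x \<in> V" "y \<in> V" "x < y" "R x y \<noteq> R (f x) (f y)"
    using nonempty unfolding changed_pairs_def by auto
  obtain z where z: "z \<in> V" "z \<noteq> y" "R x z \<noteq> R (f x) (f z)"
    using exists_other_changed_pair[of V f R k x y] assms(1,2) regular xy(1,2,4) by blast
  have "R y x \<noteq> R (f y) (f x)" using assms(3) xy(4) by (auto dest: sympD)
  then obtain w where w: "w \<in> V" "w \<noteq> x" "R y w \<noteq> R (f y) (f w)"
    using exists_other_changed_pair[of V f R k y x] assms(1,2) regular xy(1,2) by blast
  have "x \<noteq> z" "y \<noteq> w" using z(3) w(3) irreflpD[OF assms(4)] by auto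
  \<comment> \<open>As doubletons the three changed pairs need no ordering of their endpoints.\<close>
  let ?T = "{{x, y}, {x, z}, {y, w}}"
  have "?T \<subseteq> (\<lambda>(x, y). {x, y}) ` ?C"
    using xy z w \<open>x \<noteq> z\<close> \<open>y \<noteq> w\<close> doubleton_in_image_changed_pairs[OF assms(3)] by auto
  then have "card ?T \<le> card ((\<lambda>(x, y). {x, y}) ` ?C)"
    using assms(1) by (intro card_mono finite_imageI finite_changed_pairs)
  also have "\<dots> \<le> card ?C"
    using assms(1) by (intro card_image_le finite_changed_pairs)
  moreover have "card ?T = 3"
    using less_imp_neq[OF xy(3)] z(2) w(2) \<open>x \<noteq> z\<close> \<open>y \<noteq> w\<close>
    by (simp add: card_insert_if doubleton_eq_iff)
  ultimately have "card ?C \<ge> 3" by simp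
  moreover have "even (card ?C)" using assms(1-3) by (rule even_card_changed_pairs)
  ultimately show ?thesis by (elim evenE) presburger
qed

lemma symp_cycle_adj: "symp (cycle_adj n)"
  unfolding cycle_adj_def by (auto intro: sympI)

lemma irreflp_cycle_adj: "irreflp (cycle_adj n)"
  unfolding cycle_adj_def by (auto intro: irreflpI)

lemma cycle_adj_iff:
  assumes "n \<ge> 2"
  shows "cycle_adj n x y \<longleftrightarrow>
    x < n \<and> y < n \<and> (y = x + 1 \<or> x = y + 1 \<or> x = 0 \<and> y = n - 1 \<or> y = 0 \<and> x = n - 1)"
proof (cases "x < n \<and> y < n")
  case True
  then have "(x + 1) mod n = (if x + 1 = n then 0 else x + 1)"
    "(y + 1) mod n = (if y + 1 = n then 0 else y + 1)"
    by auto
  with True assms show ?thesis unfolding cycle_adj_def by auto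
qed (auto simp: cycle_adj_def)

lemma card_cycle_neighbours:
  assumes "n \<ge> 3" "w < n"
  shows "card {y \<in> {..<n}. cycle_adj n w y} = 2"
proof -
  have "{y \<in> {..<n}. cycle_adj n w y} = {if w + 1 = n then 0 else w + 1, if w = 0 then n - 1 else w - 1}"
    using assms by (auto simp: cycle_adj_iff)
  moreover have "(if w + 1 = n then 0 else w + 1) \<noteq> (if w = 0 then n - 1 else w - 1)"
    using assms by auto
  ultimately show ?thesis by simp
qed

lemma co_cycle_adj_iff:
  assumes "n \<ge> 2"
  shows "co_cycle_adj n x y \<longleftrightarrow> x < n \<and> y < n \<and> x \<noteq> y \<and>
    \<not> (y = x + 1 \<or> x = y + 1 \<or> x = 0 \<and> y = n - 1 \<or> y = 0 \<and> x = n - 1)"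
  using assms by (auto simp: co_cycle_adj_def cycle_adj_iff)

lemma co_cycle_adj_shift_3:
  assumes "n \<ge> 5" "a < n"
  shows "co_cycle_adj n a (if a + 3 < n then a + 3 else a + 3 - n)"
    "co_cycle_adj n (if a + 1 = n then 0 else a + 1) (if a + 3 < n then a + 3 else a + 3 - n)"
  using assms by (auto simp: co_cycle_adj_iff)

lemma co_cycle_adj_commute: "co_cycle_adj n x y \<longleftrightarrow> co_cycle_adj n y x"
  unfolding co_cycle_adj_def cycle_adj_def by auto

lemma cycle_adj_cases:
  assumes "cycle_adj n x y"
  obtains "x < n" "y = (if x + 1 = n then 0 else x + 1)" | "y < n" "x = (if y + 1 = n then 0 else y + 1)"
  using assms unfolding cycle_adj_def by (auto simp: mod_if)

lemma co_cycle_adj_common_neighbour: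
  assumes "n \<ge> 5" "cycle_adj n x y"
  obtains z where "co_cycle_adj n x z" "co_cycle_adj n z y"
  using assms(2)
proof (cases rule: cycle_adj_cases)
  case 1
  then show ?thesis
    using that co_cycle_adj_shift_3[OF assms(1) 1(1)] co_cycle_adj_commute by blast
next
  case 2
  then show ?thesis
    using that co_cycle_adj_shift_3[OF assms(1) 2(1)] co_cycle_adj_commute by blast
qed

lemma gdist_co_cycle_adj:
  assumes "n \<ge> 5" "x < n" "y < n"
  shows "gdist (co_cycle_adj n) x y = (if x = y then 0 else if cycle_adj n x y then 2 else 1)"
proof -
  consider "x = y" | "x \<noteq> y" "cycle_adj n x y" | "x \<noteq> y" "\<not> cycle_adj n x y" by blast
  then show ?thesis
  proof cases
    case 2
    obtain z where "co_cycle_adj n x z" "co_cycle_adj n z y"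
      using co_cycle_adj_common_neighbour[OF assms(1) 2(2)] .
    moreover have "\<not> co_cycle_adj n x y" using 2(2) by (simp add: co_cycle_adj_def)
    ultimately show ?thesis using 2 by (simp add: gdist_eq_2)
  next
    case 3
    with assms(2,3) show ?thesis by (simp add: gdist_eq_1 co_cycle_adj_def)
  qed (simp add: gdist_self)
qed

lemma delta_pair_co_cycle_adj:
  assumes "n \<ge> 5" "f permutes {..<n}" "x < n" "y < n" "x \<noteq> y"
  shows "delta_pair (co_cycle_adj n) f x y = of_bool (cycle_adj n x y \<noteq> cycle_adj n (f x) (f y))"
proof -
  have "f x < n" "f y < n"
    using permutes_in_image[OF assms(2), of x] permutes_in_image[OF assms(2), of y] assms(3,4) by auto
  moreover have "f x \<noteq> f y" using permutes_inj[OF assms(2)] assms(5) by (auto dest: injD)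
  ultimately show ?thesis
    using assms by (simp add: delta_pair_def gdist_co_cycle_adj)
qed

lemma delta_total_co_cycle_adj:
  assumes "n \<ge> 5" "f permutes {..<n}"
  shows "delta_total {..<n} (co_cycle_adj n) f = card (changed_pairs {..<n} (cycle_adj n) f)"
proof -
  let ?S = "{(x, y). x \<in> {..<n} \<and> y \<in> {..<n} \<and> x < y}"
  have "finite ?S" by (rule finite_subset[of _ "{..<n} \<times> {..<n}"]) auto
  have "delta_total {..<n} (co_cycle_adj n) f =
      (\<Sum>(x, y) \<in> ?S. of_bool (cycle_adj n x y \<noteq> cycle_adj n (f x) (f y)))"
    unfolding delta_total_def
    by (rule sum.cong) (auto simp: delta_pair_co_cycle_adj[OF assms])
  also have "\<dots> = card (changed_pairs {..<n} (cycle_adj n) f)"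
    using \<open>finite ?S\<close> by (simp add: split_def changed_pairs_def Int_def conj_commute)
  finally show ?thesis .
qed

lemma changed_pairs_cycle_adj_transpose:
  assumes "n \<ge> 4"
  shows "changed_pairs {..<n} (cycle_adj n) (transpose 0 1) = {(1, 2), (0, 2), (0, n - 1), (1, n - 1)}"
    (is "_ = ?S")
proof -
  have n: "n \<ge> 2" using assms by simp
  have changed: "cycle_adj n x y \<noteq> cycle_adj n (transpose 0 1 x) (transpose 0 1 y) \<longleftrightarrow> (x, y) \<in> ?S"
    if "x < y" "y < n" for x y
  proof -
    have "transpose 0 1 x < n" "transpose 0 1 y < n"
      using assms that by (auto simp: transpose_def)
    with assms that show ?thesis
      unfolding cycle_adj_iff[OF n] transpose_def
      by (cases "x = 0"; cases "x = 1"; cases "y = 1"; cases "y = 2") auto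
  qed
  show ?thesis
  proof (intro set_eqI iffI)
    fix p assume "p \<in> changed_pairs {..<n} (cycle_adj n) (transpose 0 1)"
    then obtain x y where "p = (x, y)" "x < y" "y < n"
        "cycle_adj n x y \<noteq> cycle_adj n (transpose 0 1 x) (transpose 0 1 y)"
      unfolding changed_pairs_def by blast
    with changed show "p \<in> ?S" by blast
  next
    fix p assume "p \<in> ?S"
    moreover from this obtain x y where "p = (x, y)" "x < y" "y < n"
      using assms by auto
    ultimately show "p \<in> changed_pairs {..<n} (cycle_adj n) (transpose 0 1)"
      using changed unfolding changed_pairs_def by auto
  qed
qed

theorem mainTheorem1:
  fixes n :: nat
  assumes "n \<ge> 5"
  shows "pi_graph {..<n} (co_cycle_adj n) = 4"
  unfolding pi_graph_def
proof (rule Least_equality)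
  have swap: "transpose 0 1 permutes {..<n}"
    using assms by (intro permutes_swap_id) auto
  have "changed_pairs {..<n} (cycle_adj n) (transpose 0 1) = {(1, 2), (0, 2), (0, n - 1), (1, n - 1)}"
    using assms by (intro changed_pairs_cycle_adj_transpose) simp
  then have "delta_total {..<n} (co_cycle_adj n) (transpose 0 1) = 4"
    using assms unfolding delta_total_co_cycle_adj[OF assms swap] by simp
  with swap show "0 < (4::nat) \<and> (\<exists>f. f permutes {..<n} \<and> delta_total {..<n} (co_cycle_adj n) f = 4)"
    by auto
next
  fix s
  assume "0 < s \<and> (\<exists>f. f permutes {..<n} \<and> delta_total {..<n} (co_cycle_adj n) f = s)"
  then obtain f where f: "f permutes {..<n}"
    and s: "s = card (changed_pairs {..<n} (cycle_adj n) f)" "s > 0"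
    using delta_total_co_cycle_adj[OF assms] by auto
  have "card {y \<in> {..<n}. cycle_adj n w y} = 2" if "w \<in> {..<n}" for w
    using assms that by (intro card_cycle_neighbours) auto
  moreover have "changed_pairs {..<n} (cycle_adj n) f \<noteq> {}"
    using s by auto
  ultimately show "4 \<le> s"
    unfolding s(1) using card_changed_pairs_ge_4[OF finite_lessThan f symp_cycle_adj irreflp_cycle_adj]
    by blast
qed

end
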